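(* Let $\Theta \subseteq \mathbb{R}^k$ and let $\{p_\theta\}_{\theta\in\Theta}$ be a family of probability densities (with respect to Lebesgue measure) on $\mathcal{X}\subseteq\mathbb{R}^d$. For each $\theta\in\Theta$ let $\ell_\theta:\mathcal{X}^2\to\mathbb{R}$ be a measurable function, and define the density of $(X,Y,Z)$ on $\mathcal{X}^2\times\{-1,0,1\}$ by $$q_\theta(x,y,z) = p_\theta(x)\,p_\theta(y)\,\mathbf{1}\{z=\operatorname{sign}(\ell_\theta(x,y))\}.$$ For $\theta^\star,\theta\in\Theta$ let $\mathcal{G}_0(\theta)=\{(x,y)\in\mathcal{X}^2 : |\ell_\theta(x,y)|>0\}$, $\mathcal{D}(\theta^\star,\theta)=\{(x,y)\in\mathcal{X}^2 : \ell_{\theta^\star}(x,y)\,\ell_\theta(x,y)<0\}$, and $$\widetilde{\mathrm{BC}}(\theta^\star,\theta)=\int_{\mathcal{D}(\theta^\star,\theta)\,\cup\,\left(\mathcal{G}_0(\theta^\star)^{\complement}\,\triangle\,\mathcal{G}_0(\theta)^{\complement}\right)} \sqrt{p_{\theta^\star}(x)p_{\theta^\star}(y)p_\theta(x)p_\theta(y)}\,\mathrm{d}x\,\mathrm{d}y .$$ Then $$\mathrm{H}(q_{\theta^\star},q_\theta)=\mathrm{H}(p_{\theta^\star}^{\otimes 2},p_\theta^{\otimes 2})+\widetilde{\mathrm{BC}}(\theta^\star,\theta),$$ where $p_\theta^{\otimes 2}(x,y)=p_\theta(x)p_\theta(y)$.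
   Context: For two probability distributions $P,Q$ with densities $p,q$ with respect to a common measure, the Bhattacharyya coefficient is $\mathrm{BC}(P,Q)=\int\sqrt{pq}$ (for $q_\theta$ the integral is over $\mathcal{X}^2$ with Lebesgue measure and summed over $z\in\{-1,0,1\}$), and the (squared) Hellinger distance is $\mathrm{H}(P,Q)=1-\mathrm{BC}(P,Q)$. $\triangle$ denotes symmetric difference of sets, and $\operatorname{sign}:\mathbb{R}\to\{-1,0,1\}$ is the usual sign function. *)

theory Defs
  imports "HOL-Analysis.Analysis"
begin

definition qdens :: "('t \<Rightarrow> 'a \<Rightarrow> real) \<Rightarrow> ('t \<Rightarrow> 'a \<times> 'a \<Rightarrow> real) \<Rightarrow> 't \<Rightarrow> 'a \<times> 'a \<Rightarrow> real \<Rightarrow> real" where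
  "qdens p l t w z = p t (fst w) * p t (snd w) * (if z = sgn (l t w) then 1 else 0)"

definition BC_q :: "'a::euclidean_space set \<Rightarrow> ('t \<Rightarrow> 'a \<Rightarrow> real) \<Rightarrow> ('t \<Rightarrow> 'a \<times> 'a \<Rightarrow> real) \<Rightarrow> 't \<Rightarrow> 't \<Rightarrow> real" where
  "BC_q X p l t1 t2 = (\<Sum>z\<in>{-1, 0, 1::real}.
      (LINT w : X \<times> X | lborel. sqrt (qdens p l t1 w z * qdens p l t2 w z)))"

definition H_q :: "'a::euclidean_space set \<Rightarrow> ('t \<Rightarrow> 'a \<Rightarrow> real) \<Rightarrow> ('t \<Rightarrow> 'a \<times> 'a \<Rightarrow> real) \<Rightarrow> 't \<Rightarrow> 't \<Rightarrow> real" where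
  "H_q X p l t1 t2 = 1 - BC_q X p l t1 t2"

definition BC_p2 :: "'a::euclidean_space set \<Rightarrow> ('t \<Rightarrow> 'a \<Rightarrow> real) \<Rightarrow> 't \<Rightarrow> 't \<Rightarrow> real" where
  "BC_p2 X p t1 t2 = (LINT w : X \<times> X | lborel.
      sqrt ((p t1 (fst w) * p t1 (snd w)) * (p t2 (fst w) * p t2 (snd w))))"

definition H_p2 :: "'a::euclidean_space set \<Rightarrow> ('t \<Rightarrow> 'a \<Rightarrow> real) \<Rightarrow> 't \<Rightarrow> 't \<Rightarrow> real" where
  "H_p2 X p t1 t2 = 1 - BC_p2 X p t1 t2"

definition G0 :: "'a set \<Rightarrow> ('t \<Rightarrow> 'a \<times> 'a \<Rightarrow> real) \<Rightarrow> 't \<Rightarrow> ('a \<times> 'a) set" where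
  "G0 X l t = {w \<in> X \<times> X. \<bar>l t w\<bar> > 0}"

definition Dset :: "'a set \<Rightarrow> ('t \<Rightarrow> 'a \<times> 'a \<Rightarrow> real) \<Rightarrow> 't \<Rightarrow> 't \<Rightarrow> ('a \<times> 'a) set" where
  "Dset X l ts t = {w \<in> X \<times> X. l ts w * l t w < 0}"

definition symdiff :: "'b set \<Rightarrow> 'b set \<Rightarrow> 'b set" where
  "symdiff A B = (A - B) \<union> (B - A)"

definition BC_tilde :: "'a::euclidean_space set \<Rightarrow> ('t \<Rightarrow> 'a \<Rightarrow> real) \<Rightarrow> ('t \<Rightarrow> 'a \<times> 'a \<Rightarrow> real) \<Rightarrow> 't \<Rightarrow> 't \<Rightarrow> real" where
  "BC_tilde X p l ts t = (LINT w : Dset X l ts t \<union> symdiff ((X \<times> X) - G0 X l ts) ((X \<times> X) - G0 X l t) | lborel.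
      sqrt (p ts (fst w) * p ts (snd w) * p t (fst w) * p t (snd w)))"

end

theory Submission
  imports Defs
begin

(* For each sign value z, the integrand of BC(q_ts, q_t) is the Bhattacharyya integrand
   sqrt(p_ts(x) p_ts(y) p_t(x) p_t(y)) of the product densities, restricted to the pairs where
   both signs equal z.  Summing over z gives the integral of that integrand over the set where
   sign(l_ts) = sign(l_t); the complementary set is exactly D(ts, t) together with the symmetric
   difference of the complements of G0(ts) and G0(t).  Hence BC(q) = BC(p2) - BC~. *)

lemma (in pair_sigma_finite) integrable_mult_fst_snd:
  fixes f :: "'a \<Rightarrow> real" and g :: "'b \<Rightarrow> real"
  assumes f: "integrable M1 f" and g: "integrable M2 g"
  shows "integrable (M1 \<Otimes>\<^sub>M M2) (\<lambda>w. f (fst w) * g (snd w))"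
proof -
  have [measurable]: "f \<in> borel_measurable M1" "g \<in> borel_measurable M2"
    using f g by auto
  have "integrable (M1 \<Otimes>\<^sub>M M2) (\<lambda>(x, y). f x * g y)"
  proof (rule Fubini_integrable)
    have "integrable M1 (\<lambda>x. norm (f x) * (\<integral>y. norm (g y) \<partial>M2))"
      using f by (intro integrable_mult_left) auto
    then show "integrable M1 (\<lambda>x. \<integral>y. norm (case (x, y) of (x, y) \<Rightarrow> f x * g y) \<partial>M2)"
      by (simp add: abs_mult)
    show "AE x in M1. integrable M2 (\<lambda>y. case (x, y) of (x, y) \<Rightarrow> f x * g y)"
      using g by simp
  qed measurable
  then show ?thesis by (simp add: case_prod_beta')
qed

lemma integrable_sqrt_mult:
  fixes f g :: "'a \<Rightarrow> real"
  assumes f: "integrable M f" and g: "integrable M g"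
    and f_nonneg: "\<And>x. f x \<ge> 0" and g_nonneg: "\<And>x. g x \<ge> 0"
  shows "integrable M (\<lambda>x. sqrt (f x * g x))"
proof (rule Bochner_Integration.integrable_bound)
  show "integrable M (\<lambda>x. f x + g x)" using f g by simp
  show "(\<lambda>x. sqrt (f x * g x)) \<in> borel_measurable M" using f g by measurable
  show "AE x in M. norm (sqrt (f x * g x)) \<le> norm (f x + g x)"
  proof (rule AE_I2)
    fix x
    have "sqrt (f x * g x) \<le> (f x + g x) / 2"
      using f_nonneg g_nonneg by (rule arith_geo_mean_sqrt)
    then show "norm (sqrt (f x * g x)) \<le> norm (f x + g x)"
      using f_nonneg[of x] g_nonneg[of x] by simp
  qed
qed

lemma set_integrable_sqrt_product_densities:
  fixes X :: "'a::euclidean_space set" and p q :: "'a \<Rightarrow> real"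
  assumes p: "set_integrable lborel X p" and q: "set_integrable lborel X q"
    and p_nonneg: "\<And>x. x \<in> X \<Longrightarrow> p x \<ge> 0" and q_nonneg: "\<And>x. x \<in> X \<Longrightarrow> q x \<ge> 0"
  shows "set_integrable lborel (X \<times> X)
           (\<lambda>w. sqrt (p (fst w) * p (snd w) * q (fst w) * q (snd w)))"
proof -
  define P where "P x = indicator X x * p x" for x
  define Q where "Q x = indicator X x * q x" for x
  have P_int: "integrable lborel P" and Q_int: "integrable lborel Q"
    using p q unfolding set_integrable_def P_def Q_def by simp_all
  have P_nonneg: "P x \<ge> 0" and Q_nonneg: "Q x \<ge> 0" for x
    using p_nonneg q_nonneg by (simp_all add: P_def Q_def indicator_def)
  have lborel_pair: "pair_sigma_finite (lborel :: 'a measure) lborel"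
    by unfold_locales
  have "integrable lborel (\<lambda>w. sqrt (P (fst w) * P (snd w) * (Q (fst w) * Q (snd w))))"
    unfolding lborel_prod[symmetric]
    using P_nonneg Q_nonneg
    by (intro integrable_sqrt_mult pair_sigma_finite.integrable_mult_fst_snd[OF lborel_pair] P_int Q_int) simp_all
  then show ?thesis
    unfolding set_integrable_def
    by (rule Bochner_Integration.integrable_cong[THEN iffD1, rotated 2])
       (auto simp: P_def Q_def indicator_def mult_ac)
qed

lemma sqrt_qdens_mult:
  "sqrt (qdens p l s w z * qdens p l t w z) =
     (if sgn (l s w) = z \<and> sgn (l t w) = z
      then sqrt (p s (fst w) * p s (snd w) * p t (fst w) * p t (snd w)) else 0)"
  by (simp add: qdens_def mult_ac)

lemma Dset_Un_symdiff_G0_eq: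
  "Dset X l s t \<union> symdiff (X \<times> X - G0 X l s) (X \<times> X - G0 X l t) =
     {w \<in> X \<times> X. sgn (l s w) \<noteq> sgn (l t w)}"
  unfolding Dset_def symdiff_def G0_def
  by (auto simp: sgn_real_def mult_less_0_iff split: if_splits)

lemma integral_split_by_sign_agreement:
  fixes f g R :: "'a \<Rightarrow> real"
  assumes R: "integrable M R"
    and f: "f \<in> borel_measurable M" and g: "g \<in> borel_measurable M"
  shows "integral\<^sup>L M R =
           (LINT w|M. indicator {w \<in> space M. sgn (f w) \<noteq> sgn (g w)} w * R w)
           + (\<Sum>z\<in>{-1, 0, 1}.
                LINT w|M. indicator ({w \<in> space M. sgn (f w) = z} \<inter> {w \<in> space M. sgn (g w) = z}) w * R w)"
proof -
  have sf: "(\<lambda>w. sgn (f w)) \<in> borel_measurable M" and sg: "(\<lambda>w. sgn (g w)) \<in> borel_measurable M"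
    using f g by (auto intro: measurable_compose[OF _ borel_measurable_sgn])
  define A where "A z = {w \<in> space M. sgn (f w) = z} \<inter> {w \<in> space M. sgn (g w) = z}" for z
  define B where "B = {w \<in> space M. sgn (f w) \<noteq> sgn (g w)}"
  have "A z \<in> sets M" for z
    unfolding A_def
    using borel_measurable_eq[OF sf measurable_const] borel_measurable_eq[OF sg measurable_const]
    by (intro sets.Int) simp_all
  moreover have "B \<in> sets M"
    unfolding B_def using sf sg by (rule borel_measurable_neq)
  ultimately have A_int: "integrable M (\<lambda>w. indicator (A z) w * R w)"
    and B_int: "integrable M (\<lambda>w. indicator B w * R w)" for z
    using integrable_mult_indicator[OF _ R] by simp_all
  have "R w = indicator B w * R w + (\<Sum>z\<in>{-1, 0, 1}. indicator (A z) w * R w)"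
    if "w \<in> space M" for w
  proof -
    have "sgn (f w) = -1 \<or> sgn (f w) = 0 \<or> sgn (f w) = 1"
      by (simp add: sgn_real_def)
    then show ?thesis
      using that by (elim disjE) (simp_all add: A_def B_def indicator_def)
  qed
  then have "integral\<^sup>L M R = integral\<^sup>L M (\<lambda>w. indicator B w * R w
      + (\<Sum>z\<in>{-1, 0, 1}. indicator (A z) w * R w))"
    by (rule Bochner_Integration.integral_cong[OF refl])
  also have "\<dots> = (LINT w|M. indicator B w * R w)
      + (\<Sum>z\<in>{-1, 0, 1}. LINT w|M. indicator (A z) w * R w)"
    by (simp only: Bochner_Integration.integral_add[OF B_int Bochner_Integration.integrable_sum[OF A_int]]
          Bochner_Integration.integral_sum[OF A_int])
  finally show ?thesis
    unfolding A_def B_def .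
qed

lemma set_integral_split_by_sign_agreement:
  fixes f g R :: "'a \<Rightarrow> real"
  assumes R: "set_integrable M S R"
    and f: "set_borel_measurable M S f" and g: "set_borel_measurable M S g"
  shows "(LINT w:S|M. R w) =
           (\<Sum>z\<in>{-1, 0, 1}. LINT w:S|M. (if sgn (f w) = z \<and> sgn (g w) = z then R w else 0))
           + (LINT w:{w \<in> S. sgn (f w) \<noteq> sgn (g w)}|M. R w)"
proof -
  define F where "F w = indicator S w * f w" for w
  define G where "G w = indicator S w * g w" for w
  have "integrable M (\<lambda>w. indicator S w * R w)"
    using R unfolding set_integrable_def by simp
  moreover have "F \<in> borel_measurable M" "G \<in> borel_measurable M"
    using f g unfolding set_borel_measurable_def F_def G_def by simp_all
  ultimately have "(LINT w:S|M. R w) =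
           (LINT w|M. indicator {w \<in> space M. sgn (F w) \<noteq> sgn (G w)} w * (indicator S w * R w))
           + (\<Sum>z\<in>{-1, 0, 1}. LINT w|M. indicator ({w \<in> space M. sgn (F w) = z}
                                   \<inter> {w \<in> space M. sgn (G w) = z}) w * (indicator S w * R w))"
    unfolding set_lebesgue_integral_def real_scaleR_def by (rule integral_split_by_sign_agreement)
  moreover have "(LINT w|M. indicator ({w \<in> space M. sgn (F w) = z}
                    \<inter> {w \<in> space M. sgn (G w) = z}) w * (indicator S w * R w)) =
      (LINT w:S|M. (if sgn (f w) = z \<and> sgn (g w) = z then R w else 0))" for z
    unfolding set_lebesgue_integral_def
    by (intro Bochner_Integration.integral_cong) (auto simp: F_def G_def indicator_def)
  moreover have "(LINT w|M. indicator {w \<in> space M. sgn (F w) \<noteq> sgn (G w)} w * (indicator S w * R w)) =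
      (LINT w:{w \<in> S. sgn (f w) \<noteq> sgn (g w)}|M. R w)"
    unfolding set_lebesgue_integral_def
    by (intro Bochner_Integration.integral_cong) (auto simp: F_def G_def indicator_def)
  ultimately show ?thesis
    by simp
qed

theorem mainTheorem1:
  fixes \<Theta> :: "(real ^ 'k) set"
    and X :: "(real ^ 'd) set"
    and p :: "real ^ 'k \<Rightarrow> real ^ 'd \<Rightarrow> real"
    and l :: "real ^ 'k \<Rightarrow> (real ^ 'd) \<times> (real ^ 'd) \<Rightarrow> real"
    and \<theta>s \<theta> :: "real ^ 'k"
  assumes X_meas: "X \<in> sets lborel"
    and p_nonneg: "\<And>t x. t \<in> \<Theta> \<Longrightarrow> x \<in> X \<Longrightarrow> p t x \<ge> 0"
    and p_meas: "\<And>t. t \<in> \<Theta> \<Longrightarrow> set_borel_measurable lborel X (p t)"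
    and p_int: "\<And>t. t \<in> \<Theta> \<Longrightarrow> set_integrable lborel X (p t)"
    and p_one: "\<And>t. t \<in> \<Theta> \<Longrightarrow> (LINT x : X | lborel. p t x) = 1"
    and l_meas: "\<And>t. t \<in> \<Theta> \<Longrightarrow> set_borel_measurable lborel (X \<times> X) (l t)"
    and "\<theta>s \<in> \<Theta>" and "\<theta> \<in> \<Theta>"
  shows "H_q X p l \<theta>s \<theta> = H_p2 X p \<theta>s \<theta> + BC_tilde X p l \<theta>s \<theta>"
proof -
  let ?R = "\<lambda>w. sqrt (p \<theta>s (fst w) * p \<theta>s (snd w) * p \<theta> (fst w) * p \<theta> (snd w))"
  have "BC_q X p l \<theta>s \<theta> = (\<Sum>z\<in>{-1, 0, 1}.
      LINT w:X \<times> X|lborel. (if sgn (l \<theta>s w) = z \<and> sgn (l \<theta> w) = z then ?R w else 0))"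
    unfolding BC_q_def sqrt_qdens_mult ..
  moreover have "BC_p2 X p \<theta>s \<theta> = (LINT w:X \<times> X|lborel. ?R w)"
    unfolding BC_p2_def mult.assoc ..
  moreover have "BC_tilde X p l \<theta>s \<theta> = (LINT w:{w \<in> X \<times> X. sgn (l \<theta>s w) \<noteq> sgn (l \<theta> w)}|lborel. ?R w)"
    unfolding BC_tilde_def Dset_Un_symdiff_G0_eq ..
  moreover have "set_integrable lborel (X \<times> X) ?R"
    using \<open>\<theta>s \<in> \<Theta>\<close> \<open>\<theta> \<in> \<Theta>\<close> by (intro set_integrable_sqrt_product_densities p_int p_nonneg)
  ultimately show ?thesis
    using set_integral_split_by_sign_agreement[of lborel "X \<times> X" ?R "l \<theta>s" "l \<theta>"]
      l_meas \<open>\<theta>s \<in> \<Theta>\<close> \<open>\<theta> \<in> \<Theta>\<close>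
    by (simp add: H_q_def H_p2_def)
qed

end
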